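(* For all integers $n\ge 0$, $k\ge 0$, $d\ge 0$ with $(n,k,d)\neq(0,0,1)$, \[ p_n^{(\mathrm{pk},\mathrm{des})}(k,d)+p_n^{(\mathrm{pk},\mathrm{des})}(k,d-1)=\sum_{l,i,j}\binom{n}{l}\, b_l^{(\mathrm{pk},\mathrm{des})}(i,j)\, b_{n-l}^{(\mathrm{pk},\mathrm{des})}(k-i,\,d-l+j), \] where the sum runs over all integers $l,i,j$.
   Context: For a permutation $\pi=\pi_1\cdots\pi_n$ of $[n]$, a descent is a position $1\le i\le n-1$ with $\pi_i>\pi_{i+1}$, an ascent one with $\pi_i<\pi_{i+1}$; $\operatorname{des}(\pi)$, $\operatorname{asc}(\pi)$ are their numbers. A peak is a position $2\le i\le n-1$ with $\pi_{i-1}<\pi_i>\pi_{i+1}$; $\operatorname{pk}(\pi)$ is the number of peaks. A ballot permutation is a permutation $\pi$ with $\operatorname{asc}(\pi_1\cdots\pi_i)\ge\operatorname{des}(\pi_1\cdots\pi_i)$ for all $i\in[n]$; $\mathscr B_n$ is the set of ballot permutations of $[n]$, and $\mathscr B_0=\{\epsilon\}$ consists of the empty permutation (and $\mathcal S_0=\{\epsilon\}$), with $\operatorname{pk}(\epsilon)=\operatorname{des}(\epsilon)=0$. Define $p_n^{(\mathrm{pk},\mathrm{des})}(k,d)=|\{\pi\in\mathcal S_n:\operatorname{pk}(\pi)=k,\operatorname{des}(\pi)=d\}|$ and $b_n^{(\mathrm{pk},\mathrm{des})}(k,d)=|\{\pi\in\mathscr B_n:\operatorname{pk}(\pi)=k,\operatorname{des}(\pi)=d\}|$;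 these are $0$ if any of $n,k,d$ is negative. Binomial coefficients $\binom{n}{l}$ are $0$ unless $0\le l\le n$. *)

theory Defs
  imports Main
begin

text \<open>Permutations of [n] are represented as lists xs with distinct xs and set xs = {1..n};
  list positions are 0-indexed, so paper position i corresponds to list index i-1.\<close>

definition perms :: "nat \<Rightarrow> nat list set" where
  "perms n = {xs. distinct xs \<and> set xs = {1..n}}"

definition des :: "nat list \<Rightarrow> nat" where
  "des xs = card {i. Suc i < length xs \<and> xs ! i > xs ! Suc i}"

definition asc :: "nat list \<Rightarrow> nat" where
  "asc xs = card {i. Suc i < length xs \<and> xs ! i < xs ! Suc i}"

definition pk :: "nat list \<Rightarrow> nat" where
  "pk xs = card {i. 1 \<le> i \<and> Suc i < length xs \<and> xs ! (i - 1) < xs ! i \<and> xs ! i > xs ! Suc i}"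

definition ballot :: "nat \<Rightarrow> nat list set" where
  "ballot n = {xs \<in> perms n. \<forall>i\<in>{1..n}. asc (take i xs) \<ge> des (take i xs)}"

definition p_pkdes :: "int \<Rightarrow> int \<Rightarrow> int \<Rightarrow> int" where
  "p_pkdes n k d = (if n < 0 \<or> k < 0 \<or> d < 0 then 0 else
     int (card {xs \<in> perms (nat n). int (pk xs) = k \<and> int (des xs) = d}))"

definition b_pkdes :: "int \<Rightarrow> int \<Rightarrow> int \<Rightarrow> int" where
  "b_pkdes n k d = (if n < 0 \<or> k < 0 \<or> d < 0 then 0 else
     int (card {xs \<in> ballot (nat n). int (pk xs) = k \<and> int (des xs) = d}))"

definition binom :: "int \<Rightarrow> int \<Rightarrow> int" where
  "binom n l = (if 0 \<le> l \<and> l \<le> n then int (nat n choose nat l) else 0)"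

end

(*
  The summand for l, i, j counts, via standardization and the binomial coefficient, pairs
  (sigma, tau) of ballot permutations of an l-subset of [n] and of its complement with
  pk sigma = i, des sigma = j, pk tau = k - i and des tau = d - l + j.  Writing rev sigma
  followed by tau gives a permutation pi with a cut after position l, and the cuts that arise
  are exactly those where the reversed prefix and the suffix are both ballot.  With h(t) the
  number of ascents minus descents of the length-t prefix of pi, a cut m is of this kind iff
  h(m) is minimal on [1, m] and h(m + 1) is minimal on [m + 1, n].  Hence no peak sits at
  the cut, so pk pi = pk sigma + pk tau, and d = des tau + l - des sigma equals des pi + 1 or
  des pi according as pi rises at the cut or not.  As h moves by +-1, the admissible cuts
  without a rise are exactly the one just before the first minimum of h on [1, n], and those
  with a rise exactly the one at its last minimum.  So each nonempty pi with pk pi = k is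
  counted once if des pi = d and once if des pi = d - 1, as on the left-hand side; the empty
  permutation only has the cut 0, with d = 0, which is why (0, 0, 1) is excluded.
*)

theory Submission
  imports Defs "HOL-Library.Infinite_Set" "HOL-Combinatorics.Multiset_Permutations"
begin

lemma card_less_Suc_split:
  "card {i. i < Suc m \<and> P i} = of_bool (P 0) + card {i. i < m \<and> P (Suc i)}"
proof -
  have "{i. i < Suc m \<and> P i} = (if P 0 then {0} else {}) \<union> Suc ` {i. i < m \<and> P (Suc i)}"
    by (auto simp: less_Suc_eq_0_disj)
  then show ?thesis
    by (auto simp: card_insert_if card_image)
qed

lemma last_take_conv_nth: "0 < m \<Longrightarrow> m \<le> length xs \<Longrightarrow> last (take m xs) = xs ! (m - 1)"
  by (subst last_conv_nth) auto

lemma sum_card_fibres: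
  assumes "finite S" "finite T" "g ` S \<subseteq> T"
  shows "(\<Sum>y\<in>T. card {x \<in> S. g x = y}) = card S"
  using sum.group[OF assms, of "\<lambda>_. 1 :: nat"] by simp

lemma sum_card_pair_fibres:
  assumes "finite A" "finite I" "finite J" "\<And>x. x \<in> A \<Longrightarrow> f x \<in> I \<and> g x \<in> J"
  shows "(\<Sum>i\<in>I. \<Sum>j\<in>J. card {x \<in> A. f x = i \<and> g x = j \<and> R x i j})
    = card {x \<in> A. R x (f x) (g x)}"
proof -
  let ?B = "{x \<in> A. R x (f x) (g x)}"
  have "(\<Sum>i\<in>I. \<Sum>j\<in>J. card {x \<in> A. f x = i \<and> g x = j \<and> R x i j})
      = (\<Sum>i\<in>I. \<Sum>j\<in>J. card {x \<in> {x \<in> ?B. f x = i}. g x = j})"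
    by (intro sum.cong refl arg_cong[where f = card]) auto
  also have "\<dots> = (\<Sum>i\<in>I. card {x \<in> ?B. f x = i})"
    using assms by (intro sum.cong refl sum_card_fibres) auto
  also have "\<dots> = card ?B"
    using assms by (intro sum_card_fibres) auto
  finally show ?thesis .
qed

lemma ex_strict_mono_onto:
  fixes S :: "nat set"
  assumes "finite S"
  obtains g where "strict_mono_on {1..card S} g" "g ` {1..card S} = S"
proof -
  obtain h where h: "bij_betw h {..<card S} S" "strict_mono_on {..<card S} h"
    using ex_bij_betw_strict_mono_card[OF assms] by blast
  have "strict_mono_on {1..card S} (\<lambda>i. h (i - 1))"
  proof (rule strict_mono_onI)
    fix r s assume "r \<in> {1..card S}" "s \<in> {1..card S}" "r < s"
    then show "h (r - 1) < h (s - 1)"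
      by (intro strict_mono_onD[OF h(2)]) auto
  qed
  moreover have "(\<lambda>i. h (i - 1)) ` {1..card S} = h ` ((\<lambda>i. i - 1) ` {1..card S})"
    by (simp add: image_image)
  moreover have "(\<lambda>i. i - 1) ` {1..card S} = {..<card S}"
    by (auto simp: image_iff intro!: bexI[where x = "Suc _"])
  ultimately show ?thesis
    using that bij_betw_imp_surj_on[OF h(1)] by metis
qed

lemma perms_eq_permutations_of_set: "perms n = permutations_of_set {1..n}"
  by (auto simp: perms_def permutations_of_set_def)

lemma length_perms: "xs \<in> perms n \<Longrightarrow> length xs = n"
  unfolding perms_eq_permutations_of_set by (simp add: length_finite_permutations_of_set)

section \<open>Descents, ascents and peaks of lists\<close>

lemma des_Nil [simp]: "des [] = 0"
  by (simp add: des_def)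

lemma des_Cons [simp]: "des (x # ys) = of_bool (ys \<noteq> [] \<and> hd ys < x) + des ys"
  by (cases ys) (simp_all add: des_def card_less_Suc_split[of "length _"] nth_Cons')

lemma asc_Nil [simp]: "asc [] = 0"
  by (simp add: asc_def)

lemma asc_Cons [simp]: "asc (x # ys) = of_bool (ys \<noteq> [] \<and> x < hd ys) + asc ys"
  by (cases ys) (simp_all add: asc_def card_less_Suc_split[of "length _"] nth_Cons')

lemma pk_eq_card_shifted:
  "pk xs = card {j. Suc (Suc j) < length xs \<and> xs ! j < xs ! Suc j \<and> xs ! Suc (Suc j) < xs ! Suc j}"
proof -
  have "{i. 1 \<le> i \<and> Suc i < length xs \<and> xs ! (i - 1) < xs ! i \<and> xs ! i > xs ! Suc i}
      = Suc ` {j. Suc (Suc j) < length xs \<and> xs ! j < xs ! Suc j \<and> xs ! Suc (Suc j) < xs ! Suc j}"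
    by (auto simp: image_iff Suc_le_eq gr0_conv_Suc)
  then show ?thesis
    unfolding pk_def by (simp add: card_image)
qed

lemma pk_Nil [simp]: "pk [] = 0"
  by (simp add: pk_def)

lemma pk_Cons [simp]: "pk (x # ys) = of_bool (length ys \<ge> 2 \<and> x < hd ys \<and> ys ! 1 < hd ys) + pk ys"
proof (cases "length ys < 2")
  case True
  then show ?thesis by (simp add: pk_eq_card_shifted)
next
  case False
  then obtain y z zs where ys: "ys = y # z # zs"
    by (cases ys; cases "tl ys") auto
  let ?P = "\<lambda>xs j. xs ! j < xs ! Suc j \<and> xs ! Suc (Suc j) < xs ! Suc j"
  have "pk (x # ys) = card {j. j < Suc (length zs) \<and> ?P (x # ys) j}"
    unfolding pk_eq_card_shifted ys by (rule arg_cong[where f = card]) auto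
  also have "\<dots> = of_bool (?P (x # ys) 0) + card {j. j < length zs \<and> ?P ys j}"
    unfolding card_less_Suc_split by (simp add: ys)
  also have "card {j. j < length zs \<and> ?P ys j} = pk ys"
    unfolding pk_eq_card_shifted ys by (rule arg_cong[where f = card]) auto
  finally show ?thesis
    by (simp add: ys)
qed

lemma des_append:
  "des (xs @ ys) = des xs + des ys + of_bool (xs \<noteq> [] \<and> ys \<noteq> [] \<and> hd ys < last xs)"
  by (induction xs) auto

lemma asc_append:
  "asc (xs @ ys) = asc xs + asc ys + of_bool (xs \<noteq> [] \<and> ys \<noteq> [] \<and> last xs < hd ys)"
  by (induction xs) auto

lemma pk_append:
  "pk (xs @ ys) = pk xs + pk ys
     + of_bool (length xs \<ge> 2 \<and> ys \<noteq> [] \<and> xs ! (length xs - 2) < last xs \<and> hd ys < last xs)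
     + of_bool (xs \<noteq> [] \<and> length ys \<ge> 2 \<and> last xs < hd ys \<and> ys ! 1 < hd ys)"
proof (induction xs rule: induct_list012)
  case (2 x)
  then show ?case by (cases ys; cases "tl ys") auto
next
  case (3 x y zs)
  then show ?case by (cases zs; cases ys) (auto simp: nth_append)
qed simp

lemma des_rev: "des (rev xs) = asc xs"
  by (induction xs) (auto simp: des_append hd_rev last_rev)

lemma asc_rev: "asc (rev xs) = des xs"
  using des_rev[of "rev xs"] by simp

lemma pk_rev: "pk (rev xs) = pk xs"
  by (induction xs) (auto simp: pk_append rev_nth hd_rev last_rev)

lemma asc_add_des: "distinct xs \<Longrightarrow> asc xs + des xs = length xs - 1"
proof (induction xs)
  case (Cons x xs)
  then show ?case by (cases xs) (auto simp: neq_iff)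
qed simp

lemma des_map:
  assumes "strict_mono_on (set xs) f"
  shows "des (map f xs) = des xs"
  unfolding des_def using assms by (auto simp: strict_mono_on_less intro!: arg_cong[where f = card])

lemma asc_map:
  assumes "strict_mono_on (set xs) f"
  shows "asc (map f xs) = asc xs"
  unfolding asc_def using assms by (auto simp: strict_mono_on_less intro!: arg_cong[where f = card])

lemma pk_map:
  assumes "strict_mono_on (set xs) f"
  shows "pk (map f xs) = pk xs"
  unfolding pk_def using assms by (auto simp: strict_mono_on_less intro!: arg_cong[where f = card])

lemma des_le_length: "des xs \<le> length xs"
  by (induction xs) auto

lemma pk_le_length: "pk xs \<le> length xs"
  by (induction xs) auto

section \<open>Height profile and ballot lists\<close>

definition height :: "nat list \<Rightarrow> nat \<Rightarrow> int" where
  "height xs t = int (asc (take t xs)) - int (des (take t xs))"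

definition is_ballot :: "nat list \<Rightarrow> bool" where
  "is_ballot xs \<longleftrightarrow> (\<forall>t. 0 \<le> height xs t)"

lemma height_0 [simp]: "height xs 0 = 0"
  by (simp add: height_def)

lemma height_beyond_length: "length xs \<le> t \<Longrightarrow> height xs t = height xs (length xs)"
  by (simp add: height_def)

lemma height_take: "s \<le> m \<Longrightarrow> height (take m xs) s = height xs s"
  by (simp add: height_def min_def)

lemma height_map:
  assumes "strict_mono_on (set xs) f"
  shows "height (map f xs) t = height xs t"
proof -
  have "strict_mono_on (set (take t xs)) f"
    using assms set_take_subset by (rule monotone_on_subset)
  then show ?thesis
    unfolding height_def take_map by (simp only: asc_map des_map)
qed

lemma is_ballot_map: "strict_mono_on (set xs) f \<Longrightarrow> is_ballot (map f xs) = is_ballot xs"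
  by (simp add: is_ballot_def height_map)

lemma height_Suc:
  assumes "distinct xs" "1 \<le> m" "m < length xs"
  shows "height xs (Suc m) = height xs m + (if xs ! (m - 1) < xs ! m then 1 else -1)"
proof -
  have "take (Suc m) xs = take m xs @ [xs ! m]" "take m xs \<noteq> []"
    using assms by (auto simp: take_Suc_conv_app_nth)
  moreover have "last (take m xs) = xs ! (m - 1)"
    using assms by (simp add: last_take_conv_nth)
  moreover have "xs ! (m - 1) \<noteq> xs ! m"
    using assms by (simp add: nth_eq_iff_index_eq)
  ultimately show ?thesis
    unfolding height_def by (simp add: asc_append des_append)
qed

lemma height_drop: "1 \<le> t \<Longrightarrow> height xs (a + t) = height xs (Suc a) + height (drop a xs) t"
proof (cases "drop a xs")
  case Nil
  then show ?thesis by (simp add: height_def)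
next
  case (Cons y ys)
  assume "1 \<le> t"
  then have "take t (drop a xs) = y # take (t - 1) ys"
    using Cons by (cases t) auto
  moreover have "take (Suc a) xs = take a xs @ [y]"
    using Cons take_add[of a 1 xs] by simp
  moreover have "take (a + t) xs = take a xs @ take t (drop a xs)"
    by (simp add: take_add)
  ultimately show ?thesis
    by (simp add: height_def asc_append des_append)
qed

lemma height_rev_take:
  assumes "m \<le> length xs" "1 \<le> t" "t \<le> m"
  shows "height (rev (take m xs)) t = height xs (Suc (m - t)) - height xs m"
proof -
  define seg where "seg = drop (m - t) (take m xs)"
  have "take t (rev (take m xs)) = rev seg"
    using assms unfolding seg_def by (simp add: take_rev min_def)
  then have "height (rev (take m xs)) t = - height seg t"
    using assms unfolding height_def by (simp add: des_rev asc_rev seg_def)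
  moreover have "height (take m xs) (m - t + t) = height (take m xs) (Suc (m - t)) + height seg t"
    unfolding seg_def using assms by (intro height_drop) auto
  ultimately show ?thesis
    using assms by (simp add: height_take)
qed

lemma is_ballot_iff: "is_ballot xs \<longleftrightarrow> (\<forall>t\<ge>1. 0 \<le> height xs t)"
  unfolding is_ballot_def by (metis height_0 less_one not_le order.refl)

lemma is_ballot_drop_iff:
  "is_ballot (drop m xs) \<longleftrightarrow> (\<forall>s>m. height xs (Suc m) \<le> height xs s)"
proof -
  have "is_ballot (drop m xs) \<longleftrightarrow> (\<forall>t\<ge>1. height xs (Suc m) \<le> height xs (m + t))"
    by (simp add: is_ballot_iff height_drop)
  also have "\<dots> \<longleftrightarrow> (\<forall>s>m. height xs (Suc m) \<le> height xs s)"
  proof (intro iffI allI impI)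
    fix s assume "\<forall>t\<ge>1. height xs (Suc m) \<le> height xs (m + t)" "m < s"
    then show "height xs (Suc m) \<le> height xs s"
      by (drule_tac spec[of _ "s - m"]) simp
  qed simp
  finally show ?thesis .
qed

lemma is_ballot_rev_take_iff:
  assumes "m \<le> length xs"
  shows "is_ballot (rev (take m xs)) \<longleftrightarrow> (\<forall>s\<in>{1..m}. height xs m \<le> height xs s)"
proof
  assume ballot: "is_ballot (rev (take m xs))"
  show "\<forall>s\<in>{1..m}. height xs m \<le> height xs s"
  proof
    fix s assume s: "s \<in> {1..m}"
    have "0 \<le> height (rev (take m xs)) (Suc (m - s))"
      using ballot unfolding is_ballot_def by blast
    moreover have "Suc (m - s) \<le> m" "Suc (m - (Suc (m - s))) = s"
      using s by auto
    ultimately show "height xs m \<le> height xs s"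
      using height_rev_take[OF assms, of "Suc (m - s)"] by simp
  qed
next
  assume min: "\<forall>s\<in>{1..m}. height xs m \<le> height xs s"
  have nonneg: "0 \<le> height (rev (take m xs)) t" if "1 \<le> t" "t \<le> m" for t
    using that min height_rev_take[OF assms that] by auto
  show "is_ballot (rev (take m xs))"
    unfolding is_ballot_iff
  proof (intro allI impI)
    fix t :: nat assume "1 \<le> t"
    show "0 \<le> height (rev (take m xs)) t"
    proof (cases "t \<le> m")
      case False
      then have "height (rev (take m xs)) t = height (rev (take m xs)) m"
        using assms height_beyond_length[of "rev (take m xs)" t] by simp
      then show ?thesis
        using nonneg[of m] by (cases "m = 0") auto
    qed (use nonneg \<open>1 \<le> t\<close> in auto)
  qed
qed

lemma ballot_eq: "ballot n = {xs \<in> perms n. is_ballot xs}"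
proof -
  have "is_ballot xs \<longleftrightarrow> (\<forall>i\<in>{1..n}. des (take i xs) \<le> asc (take i xs))" if "length xs = n" for xs
    unfolding is_ballot_iff height_def
  proof (intro iffI allI ballI impI)
    fix t :: nat
    assume ballot: "\<forall>i\<in>{1..n}. des (take i xs) \<le> asc (take i xs)" and "1 \<le> t"
    show "0 \<le> int (asc (take t xs)) - int (des (take t xs))"
    proof (cases "t \<le> n")
      case True
      with ballot \<open>1 \<le> t\<close> show ?thesis by simp
    next
      case False
      then have "take t xs = take n xs"
        using that by simp
      moreover have "des (take n xs) \<le> asc (take n xs)"
        using ballot by (cases "n = 0") auto
      ultimately show ?thesis
        by simp
    qed
  qed simp
  then show ?thesis
    unfolding ballot_def using length_perms by blast
qed

section \<open>Walks with unit steps\<close>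

definition split_point :: "(nat \<Rightarrow> int) \<Rightarrow> nat \<Rightarrow> nat \<Rightarrow> bool" where
  "split_point h N m \<longleftrightarrow> m \<le> N \<and> (\<forall>s\<in>{1..m}. h m \<le> h s) \<and> (\<forall>s>m. h (Suc m) \<le> h s)"

(* A cut at the end counts as a rise and a cut at the start does not, matching split_des_eq. *)
definition up_step :: "(nat \<Rightarrow> int) \<Rightarrow> nat \<Rightarrow> nat \<Rightarrow> bool" where
  "up_step h N m \<longleftrightarrow> 1 \<le> m \<and> (m = N \<or> h m < h (Suc m))"

locale unit_step_walk =
  fixes h :: "nat \<Rightarrow> int" and N :: nat
  assumes N_pos: "1 \<le> N"
    and unit_step: "\<And>m. 1 \<le> m \<Longrightarrow> m < N \<Longrightarrow> h (Suc m) = h m + 1 \<or> h (Suc m) = h m - 1"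
    and const_beyond: "\<And>s. N \<le> s \<Longrightarrow> h s = h N"
begin

definition min_height :: int where
  "min_height = Min (h ` {1..N})"

definition first_min :: nat where
  "first_min = (LEAST s. 1 \<le> s \<and> h s = min_height)"

definition last_min :: nat where
  "last_min = Max {s\<in>{1..N}. h s = min_height}"

lemma min_height_le: "1 \<le> s \<Longrightarrow> min_height \<le> h s"
  unfolding min_height_def using N_pos const_beyond[of s]
  by (cases "s \<le> N") (auto intro!: Min_le)

lemma min_height_attained: "\<exists>s\<in>{1..N}. h s = min_height"
  unfolding min_height_def using N_pos
  by (metis (mono_tags, lifting) Min_in atLeastAtMost_iff empty_iff finite_atLeastAtMost
      finite_imageI image_iff image_is_empty order_refl)

lemma first_min:
  shows "1 \<le> first_min" "first_min \<le> N" "h first_min = min_height"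
    and "\<And>s. 1 \<le> s \<Longrightarrow> s < first_min \<Longrightarrow> min_height < h s"
proof -
  obtain s0 where s0: "s0 \<in> {1..N}" "h s0 = min_height"
    using min_height_attained by blast
  then show "1 \<le> first_min" "h first_min = min_height"
    unfolding first_min_def by (metis (mono_tags, lifting) LeastI atLeastAtMost_iff)+
  have "first_min \<le> s0"
    unfolding first_min_def using s0 by (auto intro: Least_le)
  with s0 show "first_min \<le> N"
    by auto
  show "min_height < h s" if "1 \<le> s" "s < first_min" for s
    using that min_height_le[of s] not_less_Least[of s] unfolding first_min_def by fastforce
qed

lemma last_min:
  shows "1 \<le> last_min" "last_min \<le> N" "h last_min = min_height"
    and "\<And>s. last_min < s \<Longrightarrow> last_min < N \<Longrightarrow> min_height < h s"
proof -
  let ?T = "{s\<in>{1..N}. h s = min_height}"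
  have T: "finite ?T" "?T \<noteq> {}"
    using min_height_attained by auto
  then show "1 \<le> last_min" "last_min \<le> N" "h last_min = min_height"
    unfolding last_min_def using Max_in[OF T] by auto
  have greater: "min_height < h s" if "s \<in> {1..N}" "last_min < s" for s
    using that min_height_le[of s] Max_ge[OF T(1), of s] unfolding last_min_def by fastforce
  show "min_height < h s" if "last_min < s" "last_min < N" for s
  proof (cases "s \<le> N")
    case True
    with that \<open>1 \<le> last_min\<close> show ?thesis by (intro greater) auto
  next
    case False
    with that \<open>1 \<le> last_min\<close> show ?thesis
      using greater[of N] const_beyond[of s] by auto
  qed
qed

lemma split_point_not_up_step_iff: "split_point h N m \<and> \<not> up_step h N m \<longleftrightarrow> Suc m = first_min"
proof
  assume "split_point h N m \<and> \<not> up_step h N m"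
  then have left: "\<forall>s\<in>{1..m}. h m \<le> h s" and right: "\<forall>s>m. h (Suc m) \<le> h s"
    and m: "m \<le> N" "m = 0 \<or> m \<noteq> N \<and> h (Suc m) \<le> h m"
    by (auto simp: split_point_def up_step_def)
  have "m < N"
    using m N_pos by auto
  have below_left: "h (Suc m) < h s" if "s \<in> {1..m}" for s
  proof -
    have "h (Suc m) = h m - 1"
      using unit_step[of m] m that \<open>m < N\<close> by auto
    then show ?thesis
      using left that by fastforce
  qed
  obtain s0 where s0: "s0 \<in> {1..N}" "h s0 = min_height"
    using min_height_attained by blast
  have "h (Suc m) \<le> min_height"
    using below_left[of s0] right s0 by (cases "s0 \<le> m") (auto simp: not_le)
  then have "h (Suc m) = min_height"
    using min_height_le[of "Suc m"] by simp
  then have "first_min \<le> Suc m"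
    unfolding first_min_def by (auto intro: Least_le)
  moreover have "\<not> first_min \<le> m"
    using below_left[of first_min] first_min(1,3) \<open>h (Suc m) = min_height\<close> by auto
  ultimately show "Suc m = first_min"
    by simp
next
  assume first: "Suc m = first_min"
  then have "m < N" and min: "h (Suc m) = min_height"
    using first_min(2,3) by auto
  have above_left: "min_height < h s" if "s \<in> {1..m}" for s
    using first_min(4)[of s] that first by auto
  have step_down: "h m = min_height + 1" if "1 \<le> m"
    using unit_step[of m] that \<open>m < N\<close> min above_left[of m] by auto
  have "split_point h N m"
    unfolding split_point_def
  proof (intro conjI ballI allI impI)
    show "m \<le> N"
      using \<open>m < N\<close> by simp
  next
    fix s assume "s \<in> {1..m}"
    then show "h m \<le> h s"
      using above_left step_down by fastforce
  next
    fix s assume "m < s"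
    then show "h (Suc m) \<le> h s"
      using min min_height_le by simp
  qed
  moreover have "\<not> up_step h N m"
    using \<open>m < N\<close> min step_down unfolding up_step_def by auto
  ultimately show "split_point h N m \<and> \<not> up_step h N m" ..
qed

lemma split_point_up_step_iff: "split_point h N m \<and> up_step h N m \<longleftrightarrow> m = last_min"
proof
  assume "split_point h N m \<and> up_step h N m"
  then have left: "\<forall>s\<in>{1..m}. h m \<le> h s" and right: "\<forall>s>m. h (Suc m) \<le> h s"
    and m: "1 \<le> m" "m \<le> N" "m = N \<or> h m < h (Suc m)"
    by (auto simp: split_point_def up_step_def)
  have above_right: "h m < h s" if "m < s" "s \<le> N" for s
  proof -
    have "h (Suc m) = h m + 1"
      using unit_step[of m] m that by auto
    then show ?thesis
      using right that by fastforce
  qed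
  obtain s0 where s0: "s0 \<in> {1..N}" "h s0 = min_height"
    using min_height_attained by blast
  have "h m \<le> h s0"
  proof (cases "s0 \<le> m")
    case True
    with left s0 show ?thesis by fastforce
  next
    case False
    with above_right[of s0] s0 show ?thesis by simp
  qed
  then have min: "h m = min_height"
    using min_height_le[OF m(1)] s0 by simp
  then have "m \<le> last_min"
    unfolding last_min_def using m by (intro Max_ge) auto
  moreover have "\<not> m < last_min"
    using above_right[of last_min] last_min(2,3) min by auto
  ultimately show "m = last_min"
    by simp
next
  assume m: "m = last_min"
  have step_up: "h (Suc m) = min_height + 1" if "m \<noteq> N"
    using unit_step[of m] last_min(1,2,3) last_min(4)[of "Suc m"] m that by auto
  have right: "h (Suc m) \<le> h s" if "m < s" for s
  proof (cases "m = N")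
    case True
    then show ?thesis
      using const_beyond[of s] const_beyond[of "Suc m"] that by simp
  next
    case False
    then show ?thesis
      using step_up last_min(2) last_min(4)[of s] m that by fastforce
  qed
  have "split_point h N m"
    unfolding split_point_def using last_min(2,3) min_height_le m right by auto
  moreover have "up_step h N m"
    unfolding up_step_def using last_min(1,3) m step_up by (cases "m = N") auto
  ultimately show "split_point h N m \<and> up_step h N m" ..
qed

end

section \<open>Cutting a permutation into two ballot lists\<close>

definition ballot_split :: "nat list \<Rightarrow> nat \<Rightarrow> bool" where
  "ballot_split xs m \<longleftrightarrow> m \<le> length xs \<and> is_ballot (rev (take m xs)) \<and> is_ballot (drop m xs)"

(* The d for which the cut after position m is counted on the right-hand side of the theorem,
   solved from des tau = d - m + des sigma with sigma = rev (take m xs), tau = drop m xs. *)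
definition split_des :: "nat list \<Rightarrow> nat \<Rightarrow> int" where
  "split_des xs m = int (des (drop m xs)) + int m - int (des (rev (take m xs)))"

lemma unit_step_walk_height:
  assumes "distinct xs" "xs \<noteq> []"
  shows "unit_step_walk (height xs) (length xs)"
proof
  show "1 \<le> length xs"
    using assms(2) by (simp add: Suc_le_eq)
  show "height xs (Suc m) = height xs m + 1 \<or> height xs (Suc m) = height xs m - 1"
    if "1 \<le> m" "m < length xs" for m
    using height_Suc[OF assms(1) that] by auto
  show "height xs s = height xs (length xs)" if "length xs \<le> s" for s
    using that by (rule height_beyond_length)
qed

lemma ballot_split_iff_split_point:
  "ballot_split xs m \<longleftrightarrow> split_point (height xs) (length xs) m"
  unfolding ballot_split_def split_point_def
  by (auto simp: is_ballot_rev_take_iff is_ballot_drop_iff)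

lemma split_des_eq:
  assumes "distinct xs" "xs \<noteq> []" "m \<le> length xs"
  shows "split_des xs m = int (des xs) + of_bool (up_step (height xs) (length xs) m)"
proof -
  consider "m = 0" | "m = length xs" | "1 \<le> m" "m < length xs"
    using assms(3) by linarith
  then show ?thesis
  proof cases
    case 1
    then show ?thesis
      by (simp add: split_des_def up_step_def)
  next
    case 2
    then show ?thesis
      using asc_add_des[OF assms(1)] assms(2)
      by (cases "length xs") (simp_all add: split_des_def up_step_def des_rev)
  next
    case 3
    let ?a = "take m xs" and ?b = "drop m xs"
    have "?a \<noteq> []" "?b \<noteq> []" "last ?a = xs ! (m - 1)" "hd ?b = xs ! m"
      using 3 by (auto simp: last_take_conv_nth hd_drop_conv_nth)
    then have "des xs = des ?a + des ?b + of_bool (xs ! m < xs ! (m - 1))"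
      using des_append[of ?a ?b] by simp
    moreover have "asc ?a + des ?a = m - 1"
      using asc_add_des[of ?a] assms(1) 3 by simp
    moreover have "xs ! (m - 1) \<noteq> xs ! m"
      using assms(1) 3 by (simp add: nth_eq_iff_index_eq)
    ultimately show ?thesis
      using 3 height_Suc[OF assms(1) 3]
      by (auto simp: split_des_def up_step_def des_rev)
  qed
qed

lemma pk_split:
  assumes "distinct xs" "ballot_split xs m"
  shows "pk xs = pk (take m xs) + pk (drop m xs)"
proof -
  let ?a = "take m xs" and ?b = "drop m xs"
  have m: "m \<le> length xs" and left: "\<forall>s\<in>{1..m}. height xs m \<le> height xs s"
    and right: "\<forall>s>m. height xs (Suc m) \<le> height xs s"
    using assms(2) by (auto simp: ballot_split_iff_split_point split_point_def)
  have no_peak_before: "\<not> xs ! (m - 2) < xs ! (m - 1)" if "2 \<le> m" "m < length xs"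
  proof
    assume "xs ! (m - 2) < xs ! (m - 1)"
    then have "height xs m = height xs (m - 1) + 1"
      using height_Suc[OF assms(1), of "m - 1"] that by (simp add: numeral_2_eq_2 Suc_diff_Suc)
    moreover have "height xs m \<le> height xs (m - 1)"
      using left that by simp
    ultimately show False
      by simp
  qed
  have no_peak_after: "\<not> xs ! Suc m < xs ! m" if "0 < m" "2 \<le> length xs - m"
  proof
    assume "xs ! Suc m < xs ! m"
    then have "height xs (Suc (Suc m)) = height xs (Suc m) - 1"
      using height_Suc[OF assms(1), of "Suc m"] that by simp
    moreover have "height xs (Suc m) \<le> height xs (Suc (Suc m))"
      using right by simp
    ultimately show False
      by simp
  qed
  have "pk xs = pk (?a @ ?b)"
    by simp
  also have "\<dots> = pk ?a + pk ?b"
    unfolding pk_append using no_peak_before no_peak_after m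
    by (auto simp: last_take_conv_nth hd_drop_conv_nth)
  finally show ?thesis .
qed

lemma card_ballot_splits:
  assumes "distinct xs" "xs \<noteq> []"
  shows "card {m. ballot_split xs m \<and> split_des xs m = d}
    = of_bool (d = int (des xs)) + of_bool (d = int (des xs) + 1)"
proof -
  interpret unit_step_walk "height xs" "length xs"
    using assms by (rule unit_step_walk_height)
  have splits: "{m. ballot_split xs m \<and> split_des xs m = d}
      = {m. split_point (height xs) (length xs) m
          \<and> d = int (des xs) + of_bool (up_step (height xs) (length xs) m)}"
    using split_des_eq[OF assms] by (auto simp: ballot_split_iff_split_point split_point_def)
  consider "d = int (des xs)" | "d = int (des xs) + 1" | "d \<noteq> int (des xs)" "d \<noteq> int (des xs) + 1"
    by blast
  then show ?thesis
  proof cases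
    case 1
    have "{m. split_point (height xs) (length xs) m \<and> \<not> up_step (height xs) (length xs) m}
        = {first_min - 1}"
      unfolding split_point_not_up_step_iff using first_min(1) by auto
    with 1 show ?thesis
      unfolding splits by simp
  next
    case 2
    have "{m. split_point (height xs) (length xs) m \<and> up_step (height xs) (length xs) m}
        = {last_min}"
      using split_point_up_step_iff by blast
    with 2 show ?thesis
      unfolding splits by simp
  next
    case 3
    then show ?thesis
      unfolding splits by auto
  qed
qed

lemma card_ballot_splits_of_perm:
  assumes "xs \<in> perms N" "(N, k, d) \<noteq> (0, 0, 1)"
  shows "int (card {L. ballot_split xs L \<and> int (pk xs) = k \<and> split_des xs L = d})
    = of_bool (int (pk xs) = k \<and> int (des xs) = d) + of_bool (int (pk xs) = k \<and> int (des xs) = d - 1)"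
proof (cases "xs = []")
  case True
  then have "N = 0"
    using length_perms[OF assms(1)] by simp
  have empty_split: "ballot_split [] L \<longleftrightarrow> L = 0" for L
    by (simp add: ballot_split_def is_ballot_def height_def)
  have splits: "{L. ballot_split xs L \<and> int (pk xs) = k \<and> split_des xs L = d}
      = {L. L = 0 \<and> k = 0 \<and> d = 0}"
  proof (intro Collect_cong)
    fix L
    show "ballot_split xs L \<and> int (pk xs) = k \<and> split_des xs L = d \<longleftrightarrow> L = 0 \<and> k = 0 \<and> d = 0"
      using True empty_split[of L] by (cases "L = 0") (simp_all add: split_des_def)
  qed
  show ?thesis
    unfolding splits using True \<open>N = 0\<close> assms(2) by (cases "k = 0 \<and> d = 0") simp_all
next
  case False
  have "distinct xs"
    using assms(1) by (simp add: perms_def)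
  show ?thesis
  proof (cases "int (pk xs) = k")
    case True
    then show ?thesis
      using card_ballot_splits[OF \<open>distinct xs\<close> False, of d] by auto
  qed simp
qed

section \<open>Standardization\<close>

definition order_invariant :: "(nat list \<Rightarrow> bool) \<Rightarrow> bool" where
  "order_invariant P \<longleftrightarrow> (\<forall>f xs. strict_mono_on (set xs) f \<longrightarrow> P (map f xs) = P xs)"

lemma card_permutations_of_set_filter:
  assumes "finite S" "order_invariant P"
  shows "card {xs \<in> permutations_of_set S. P xs} = card {xs \<in> perms (card S). P xs}"
proof -
  obtain g where g: "strict_mono_on {1..card S} g" "g ` {1..card S} = S"
    using ex_strict_mono_onto[OF assms(1)] by blast
  have inj: "inj_on g {1..card S}"
    using g(1) by (rule strict_mono_on_imp_inj_on)
  have "permutations_of_set S = map g ` perms (card S)"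
    unfolding perms_eq_permutations_of_set using permutations_of_set_image_inj[OF inj] g(2) by simp
  moreover have "P (map g xs) = P xs" if "xs \<in> perms (card S)" for xs
    using assms(2) g(1) that unfolding order_invariant_def by (simp add: perms_def)
  ultimately have "{xs \<in> permutations_of_set S. P xs} = map g ` {xs \<in> perms (card S). P xs}"
    by auto
  moreover have "inj_on (map g) {xs \<in> perms (card S). P xs}"
    using inj by (intro inj_on_mapI) (auto simp: perms_def)
  ultimately show ?thesis
    by (simp add: card_image)
qed

lemma card_perms_take_drop:
  assumes "order_invariant P" "order_invariant Q" "l \<le> N"
  shows "card {xs \<in> perms N. P (take l xs) \<and> Q (drop l xs)}
    = (N choose l) * card {xs \<in> perms l. P xs} * card {xs \<in> perms (N - l). Q xs}"
proof -
  define X where "X = {xs \<in> perms N. P (take l xs) \<and> Q (drop l xs)}"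
  define F where "F = {S. S \<subseteq> {1..N} \<and> card S = l}"
  define A where "A S = {a \<in> permutations_of_set S. P a}" for S
  define B where "B S = {b \<in> permutations_of_set ({1..N} - S). Q b}" for S
  have fiber: "{xs \<in> X. set (take l xs) = S} = (\<lambda>(a, b). a @ b) ` (A S \<times> B S)"
    if "S \<in> F" for S
  proof (intro equalityI subsetI)
    fix xs assume "xs \<in> {xs \<in> X. set (take l xs) = S}"
    then have "xs \<in> perms N" "P (take l xs)" "Q (drop l xs)" "set (take l xs) = S"
      by (auto simp: X_def)
    moreover have "set (drop l xs) = {1..N} - S"
    proof -
      have "distinct (take l xs @ drop l xs)" "set (take l xs @ drop l xs) = {1..N}"
        using calculation(1) by (simp_all add: perms_def)
      with calculation(4) show ?thesis
        unfolding distinct_append set_append by blast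
    qed
    ultimately have "(take l xs, drop l xs) \<in> A S \<times> B S"
      by (auto simp: A_def B_def perms_def permutations_of_set_def)
    then show "xs \<in> (\<lambda>(a, b). a @ b) ` (A S \<times> B S)"
      by (force intro: image_eqI[where x = "(take l xs, drop l xs)"])
  next
    fix xs assume "xs \<in> (\<lambda>(a, b). a @ b) ` (A S \<times> B S)"
    then obtain a b where ab: "xs = a @ b" "a \<in> A S" "b \<in> B S"
      by auto
    have "length a = l"
      using ab(2) that by (auto simp: A_def F_def length_finite_permutations_of_set)
    moreover have "a @ b \<in> perms N"
      using ab that by (auto simp: A_def B_def F_def perms_def permutations_of_set_def)
    ultimately show "xs \<in> {xs \<in> X. set (take l xs) = S}"
      using ab by (auto simp: X_def A_def B_def permutations_of_set_def)
  qed
  have card_fiber: "card {xs \<in> X. set (take l xs) = S}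
      = card {xs \<in> perms l. P xs} * card {xs \<in> perms (N - l). Q xs}" if "S \<in> F" for S
  proof -
    have "finite S" "card S = l" "card ({1..N} - S) = N - l"
      using that by (auto simp: F_def card_Diff_subset finite_subset)
    moreover have "inj_on (\<lambda>(a, b). a @ b) (A S \<times> B S)"
      by (rule inj_onI) (auto simp: A_def length_finite_permutations_of_set)
    ultimately show ?thesis
      unfolding fiber[OF that] A_def B_def
      by (simp add: card_image card_cartesian_product card_permutations_of_set_filter assms(1,2))
  qed
  have "card X = (\<Sum>S\<in>F. card {xs \<in> X. set (take l xs) = S})"
  proof -
    have "set (take l xs) \<in> F" if "xs \<in> X" for xs
    proof -
      have "distinct xs" "set xs = {1..N}" "length xs = N"
        using that length_perms by (auto simp: X_def perms_def)
      then show ?thesis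
        using assms(3) distinct_card[of "take l xs"] by (auto simp: F_def dest: in_set_takeD)
    qed
    moreover have "finite X" "finite F"
      by (auto simp: X_def F_def perms_eq_permutations_of_set)
    ultimately show ?thesis
      by (simp add: sum_card_fibres image_subset_iff)
  qed
  also have "\<dots> = card F * (card {xs \<in> perms l. P xs} * card {xs \<in> perms (N - l). Q xs})"
    by (simp add: card_fiber)
  also have "card F = N choose l"
    unfolding F_def using n_subsets[of "{1..N}" l] by simp
  finally show ?thesis
    by (simp add: X_def mult.assoc)
qed

lemma card_perms_filter_rev: "card {xs \<in> perms n. P (rev xs)} = card {xs \<in> perms n. P xs}"
proof -
  have "{xs \<in> perms n. P (rev xs)} = rev ` {xs \<in> perms n. P xs}"
  proof (intro equalityI subsetI)
    fix xs assume "xs \<in> {xs \<in> perms n. P (rev xs)}"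
    then show "xs \<in> rev ` {xs \<in> perms n. P xs}"
      by (rule_tac image_eqI[where x = "rev xs"]) (simp_all add: perms_def)
  qed (clarsimp simp: perms_def)
  then show ?thesis
    by (simp add: card_image)
qed

lemma order_invariant_rev: "order_invariant P \<Longrightarrow> order_invariant (\<lambda>xs. P (rev xs))"
  unfolding order_invariant_def by (metis rev_map set_rev)

lemma order_invariant_ballot_stats: "order_invariant (\<lambda>xs. is_ballot xs \<and> R (pk xs) (des xs))"
  unfolding order_invariant_def by (simp add: is_ballot_map pk_map des_map)

lemma p_pkdes_eq_sum:
  "p_pkdes (int N) k d = (\<Sum>xs\<in>perms N. of_bool (int (pk xs) = k \<and> int (des xs) = d))"
  by (auto simp: p_pkdes_def perms_eq_permutations_of_set Int_def)

lemma b_pkdes_eq_card: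
  "b_pkdes (int l) i j = int (card {xs \<in> perms l. is_ballot xs \<and> int (pk xs) = i \<and> int (des xs) = j})"
  by (auto simp: b_pkdes_def ballot_eq intro!: arg_cong[where f = card])

lemma binom_mult_b_pkdes_eq_card:
  assumes "L \<le> N"
  shows "binom (int N) (int L) * b_pkdes (int L) i j * b_pkdes (int N - int L) (k - i) (d - int L + j)
    = int (card {xs \<in> perms N. int (pk (rev (take L xs))) = i \<and> int (des (rev (take L xs))) = j
        \<and> ballot_split xs L \<and> int (pk (drop L xs)) = k - i \<and> int (des (drop L xs)) = d - int L + j})"
proof -
  let ?P = "\<lambda>a. is_ballot a \<and> int (pk a) = i \<and> int (des a) = j"
  let ?Q = "\<lambda>b. is_ballot b \<and> int (pk b) = k - i \<and> int (des b) = d - int L + j"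
  have invariant: "order_invariant (\<lambda>a. ?P (rev a))" "order_invariant ?Q"
    by (intro order_invariant_rev order_invariant_ballot_stats)+
  have "card {xs \<in> perms N. ?P (rev (take L xs)) \<and> ?Q (drop L xs)}
      = (N choose L) * card {xs \<in> perms L. ?P xs} * card {xs \<in> perms (N - L). ?Q xs}"
    using card_perms_take_drop[OF invariant assms] card_perms_filter_rev[of L ?P] by simp
  moreover have "{xs \<in> perms N. ?P (rev (take L xs)) \<and> ?Q (drop L xs)}
      = {xs \<in> perms N. int (pk (rev (take L xs))) = i \<and> int (des (rev (take L xs))) = j
        \<and> ballot_split xs L \<and> int (pk (drop L xs)) = k - i \<and> int (des (drop L xs)) = d - int L + j}"
    using assms by (auto simp: ballot_split_def length_perms)
  moreover have "b_pkdes (int N - int L) (k - i) (d - int L + j)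
      = int (card {xs \<in> perms (N - L). ?Q xs})"
    using assms b_pkdes_eq_card[of "N - L"] by (simp add: of_nat_diff)
  ultimately show ?thesis
    using assms by (simp add: binom_def b_pkdes_eq_card)
qed

lemma sum_binom_mult_b_pkdes_eq_card:
  assumes "L \<le> N"
  shows "(\<Sum>i\<in>{0..int N}. \<Sum>j\<in>{0..int N}.
      binom (int N) (int L) * b_pkdes (int L) i j * b_pkdes (int N - int L) (k - i) (d - int L + j))
    = int (card {xs \<in> perms N. ballot_split xs L \<and> int (pk xs) = k \<and> split_des xs L = d})"
proof -
  let ?left_pk = "\<lambda>xs. int (pk (rev (take L xs)))" and ?left_des = "\<lambda>xs. int (des (rev (take L xs)))"
  let ?R = "\<lambda>xs i j. ballot_split xs L \<and> int (pk (drop L xs)) = k - i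
    \<and> int (des (drop L xs)) = d - int L + j"
  have bounded: "?left_pk xs \<in> {0..int N} \<and> ?left_des xs \<in> {0..int N}" if "xs \<in> perms N" for xs
    using that assms pk_le_length[of "rev (take L xs)"] des_le_length[of "rev (take L xs)"]
    by (auto simp: length_perms)
  have "(\<Sum>i\<in>{0..int N}. \<Sum>j\<in>{0..int N}.
      binom (int N) (int L) * b_pkdes (int L) i j * b_pkdes (int N - int L) (k - i) (d - int L + j))
    = int (\<Sum>i\<in>{0..int N}. \<Sum>j\<in>{0..int N}.
        card {xs \<in> perms N. ?left_pk xs = i \<and> ?left_des xs = j \<and> ?R xs i j})"
    by (simp only: binom_mult_b_pkdes_eq_card[OF assms] of_nat_sum)
  also have "\<dots> = int (card {xs \<in> perms N. ?R xs (?left_pk xs) (?left_des xs)})"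
    using bounded by (subst sum_card_pair_fibres) (simp_all add: perms_eq_permutations_of_set)
  also have "{xs \<in> perms N. ?R xs (?left_pk xs) (?left_des xs)}
      = {xs \<in> perms N. ballot_split xs L \<and> int (pk xs) = k \<and> split_des xs L = d}"
    using pk_split by (auto simp: perms_def pk_rev split_des_def)
  finally show ?thesis .
qed

lemma sum_card_ballot_splits_swap:
  "(\<Sum>L\<in>{0..N}. card {xs \<in> perms N. ballot_split xs L \<and> P xs L})
    = (\<Sum>xs\<in>perms N. card {L. ballot_split xs L \<and> P xs L})"
proof -
  have "(\<Sum>L\<in>{0..N}. card {xs \<in> perms N. ballot_split xs L \<and> P xs L})
      = (\<Sum>xs\<in>perms N. card {L \<in> {0..N}. ballot_split xs L \<and> P xs L})"
    using sum.swap_restrict[of "{0..N}" "perms N" "\<lambda>_ _. 1 :: nat" "\<lambda>L xs. ballot_split xs L \<and> P xs L"]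
    by (simp add: perms_eq_permutations_of_set)
  also have "\<dots> = (\<Sum>xs\<in>perms N. card {L. ballot_split xs L \<and> P xs L})"
    by (intro sum.cong refl arg_cong[where f = card]) (auto simp: ballot_split_def length_perms)
  finally show ?thesis .
qed

theorem theorem3p1:
  fixes n k d :: int
  assumes "n \<ge> 0" and "k \<ge> 0" and "d \<ge> 0" and "(n, k, d) \<noteq> (0, 0, 1)"
  shows "p_pkdes n k d + p_pkdes n k (d - 1) =
    (\<Sum>l\<in>{0..n}. \<Sum>i\<in>{0..n}. \<Sum>j\<in>{0..n}.
       binom n l * b_pkdes l i j * b_pkdes (n - l) (k - i) (d - l + j))"
proof -
  obtain N where n: "n = int N"
    using assms(1) nonneg_eq_int by blast
  let ?split = "\<lambda>xs L. int (pk xs) = k \<and> split_des xs L = d"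
  have "{0..n} = int ` {0..N}"
    by (simp add: n image_int_atLeastAtMost)
  then have reindex: "(\<Sum>l\<in>{0..n}. F l) = (\<Sum>L\<in>{0..N}. F (int L))" for F :: "int \<Rightarrow> int"
    by (simp add: sum.reindex)
  have "(\<Sum>l\<in>{0..n}. \<Sum>i\<in>{0..n}. \<Sum>j\<in>{0..n}.
       binom n l * b_pkdes l i j * b_pkdes (n - l) (k - i) (d - l + j))
      = (\<Sum>L\<in>{0..N}. int (card {xs \<in> perms N. ballot_split xs L \<and> ?split xs L}))"
    by (subst reindex) (simp add: n sum_binom_mult_b_pkdes_eq_card)
  also have "\<dots> = (\<Sum>xs\<in>perms N. int (card {L. ballot_split xs L \<and> ?split xs L}))"
    using sum_card_ballot_splits_swap[of N ?split] by (simp flip: of_nat_sum)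
  also have "\<dots> = (\<Sum>xs\<in>perms N. of_bool (int (pk xs) = k \<and> int (des xs) = d)
      + of_bool (int (pk xs) = k \<and> int (des xs) = d - 1))"
    using assms(4) n by (intro sum.cong refl card_ballot_splits_of_perm) auto
  also have "\<dots> = p_pkdes n k d + p_pkdes n k (d - 1)"
    unfolding n p_pkdes_eq_sum sum.distrib ..
  finally show ?thesis ..
qed

end
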